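(* Let $0<\alpha\le2$, $j\ne0$, $V\in C^2(\mathbb{T})$, and real numbers $p_1,\dots,p_n\ge0$, $q_1,\dots,q_n$ with $p_k^2+q_k^2>0$ for $1\le k\le n$. If $(c_1,d_1),(c_2,d_2)\in\mathcal{C}$ both solve the system (S), then $(c_1,d_1)=(c_2,d_2)$.
   Context: $\mathbb{T}=\mathbb{R}/\mathbb{Z}$. Set $c_j=(j^2/2)^{1/\alpha}$; $\phi_\alpha(t)=\frac{c_j\alpha}{\alpha-1}t^{(\alpha-1)/\alpha}$ if $\alpha\ne1$, $\phi_\alpha(t)=c_j\ln t$ if $\alpha=1$ ($t>0$). $\mathcal{C}\subset\mathbb{R}^{2n+1}$ is the set of $(a_0,\dots,a_n,b_1,\dots,b_n)$ with $a_0+\sum_{k=1}^n(a_k\cos(2\pi kx)+b_k\sin(2\pi kx))-V(x)>0$ for all $x\in\mathbb{T}$; on $\mathcal{C}$, $\Phi_\alpha(a_0,\dots,b_n)=\int_{\mathbb{T}}\phi_\alpha\big(a_0+\sum_{k=1}^n(a_k\cos(2\pi ky)+b_k\sin(2\pi ky))-V(y)\big)\,dy$. System (S): $\partial\Phi_\alpha/\partial a_0=1$, $\partial\Phi_\alpha/\partial a_k=\frac{p_ka_k+q_kb_k}{p_k^2+q_k^2}$, $\partial\Phi_\alpha/\partial b_k=\frac{p_kb_k-q_ka_k}{p_k^2+q_k^2}$ for $1\le k\le n$. *)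

theory Defs
  imports "HOL-Analysis.Analysis"
begin

definition cj :: "real \<Rightarrow> real \<Rightarrow> real" where
  "cj alpha j = (j^2 / 2) powr (1 / alpha)"

text \<open>phi_alpha(t), meaningful for t > 0\<close>
definition phi :: "real \<Rightarrow> real \<Rightarrow> real \<Rightarrow> real" where
  "phi alpha j t = (if alpha \<noteq> 1
     then cj alpha j * alpha / (alpha - 1) * t powr ((alpha - 1) / alpha)
     else cj alpha j * ln t)"

text \<open>The coefficient vector (a_0,...,a_n,b_1,...,b_n) is represented by a, b :: nat => real,
  only the entries a 0..a n and b 1..b n being relevant.\<close>
definition trig :: "nat \<Rightarrow> (nat \<Rightarrow> real) \<Rightarrow> (nat \<Rightarrow> real) \<Rightarrow> real \<Rightarrow> real" where
  "trig n a b x = a 0 + (\<Sum>k=1..n. a k * cos (2 * pi * real k * x) + b k * sin (2 * pi * real k * x))"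

definition inC :: "nat \<Rightarrow> (real \<Rightarrow> real) \<Rightarrow> (nat \<Rightarrow> real) \<Rightarrow> (nat \<Rightarrow> real) \<Rightarrow> bool" where
  "inC n V a b \<longleftrightarrow> (\<forall>x. trig n a b x - V x > 0)"

text \<open>Phi_alpha, integral over the torus T = R/Z realised as [0,1]\<close>
definition Phi :: "real \<Rightarrow> real \<Rightarrow> nat \<Rightarrow> (real \<Rightarrow> real) \<Rightarrow> (nat \<Rightarrow> real) \<Rightarrow> (nat \<Rightarrow> real) \<Rightarrow> real" where
  "Phi alpha j n V a b = integral {0..1} (\<lambda>y. phi alpha j (trig n a b y - V y))"

definition solves_S :: "real \<Rightarrow> real \<Rightarrow> nat \<Rightarrow> (real \<Rightarrow> real) \<Rightarrow> (nat \<Rightarrow> real) \<Rightarrow> (nat \<Rightarrow> real)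
    \<Rightarrow> (nat \<Rightarrow> real) \<Rightarrow> (nat \<Rightarrow> real) \<Rightarrow> bool" where
  "solves_S alpha j n V p q a b \<longleftrightarrow>
     ((\<lambda>t. Phi alpha j n V (a(0 := t)) b) has_real_derivative 1) (at (a 0)) \<and>
     (\<forall>k\<in>{1..n}.
        ((\<lambda>t. Phi alpha j n V (a(k := t)) b) has_real_derivative
            ((p k * a k + q k * b k) / ((p k)^2 + (q k)^2))) (at (a k)) \<and>
        ((\<lambda>t. Phi alpha j n V a (b(k := t))) has_real_derivative
            ((p k * b k - q k * a k) / ((p k)^2 + (q k)^2))) (at (b k)))"

definition C2_torus :: "(real \<Rightarrow> real) \<Rightarrow> bool" where
  "C2_torus V \<longleftrightarrow> (\<forall>x. V (x + 1) = V x) \<and>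
     (\<exists>V' V''. (\<forall>x. (V has_real_derivative V' x) (at x)) \<and>
               (\<forall>x. (V' has_real_derivative V'' x) (at x)) \<and> continuous_on UNIV V'')"

end

theory Submission
  imports Defs
begin

text \<open>
  Since phi is concave, so is Phi, and (S) says that its gradient at a solution x equals
  e_0 + M x, where M is block diagonal with 2x2 blocks p_k/(p_k^2 + q_k^2) times the identity
  plus an antisymmetric matrix. For two solutions with densities u1, u2 and coefficient
  difference d, pairing the difference of the gradients with d gives
  integral (phi'(u1) - phi'(u2)) * (u1 - u2) = sum_k p_k |d_k|^2 / (p_k^2 + q_k^2) >= 0.
  The integrand is <= 0 and vanishes only where u1 = u2, because phi' is strictly decreasing.
  Hence u1 = u2, the two gradients coincide, and d = 0 because each block of M is invertible.
\<close>

lemma DERIV_eq_supergradient: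
  fixes F :: "real \<Rightarrow> real"
  assumes "(F has_real_derivative D) (at x)"
    and "\<forall>\<^sub>F h in at 0. F (x + h) - F x \<le> h * L"
  shows "D = L"
proof -
  have lim: "((\<lambda>h. (F (x + h) - F x) / h) \<longlongrightarrow> D) (at 0)"
    using assms(1) unfolding DERIV_def .
  have "D \<le> L"
  proof (rule tendsto_upperbound)
    show "((\<lambda>h. (F (x + h) - F x) / h) \<longlongrightarrow> D) (at_right 0)"
      using lim by (rule tendsto_mono[OF at_le, rotated]) simp
    have "\<forall>\<^sub>F h in at_right 0. F (x + h) - F x \<le> h * L \<and> h > 0"
      using filter_leD[OF at_le assms(2)] by (rule eventually_conj) (auto simp: eventually_at_filter)
    then show "\<forall>\<^sub>F h in at_right 0. (F (x + h) - F x) / h \<le> L"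
      by eventually_elim (simp add: divide_le_eq mult.commute)
  qed simp
  moreover have "L \<le> D"
  proof (rule tendsto_lowerbound)
    show "((\<lambda>h. (F (x + h) - F x) / h) \<longlongrightarrow> D) (at_left 0)"
      using lim by (rule tendsto_mono[OF at_le, rotated]) simp
    have "\<forall>\<^sub>F h in at_left 0. F (x + h) - F x \<le> h * L \<and> h < 0"
      using filter_leD[OF at_le assms(2)] by (rule eventually_conj) (auto simp: eventually_at_filter)
    then show "\<forall>\<^sub>F h in at_left 0. L \<le> (F (x + h) - F x) / h"
      by eventually_elim (simp add: le_divide_eq mult.commute)
  qed simp
  ultimately show ?thesis by simp
qed

lemma continuous_on_compact_pos_lower_bound:
  fixes u :: "'a::topological_space \<Rightarrow> real"
  assumes "compact K" "continuous_on K u" "\<forall>y\<in>K. 0 < u y"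
  obtains m where "0 < m" "\<forall>y\<in>K. m \<le> u y"
proof (cases "K = {}")
  case False
  then obtain y0 where "y0 \<in> K" "\<forall>y\<in>K. u y0 \<le> u y"
    using continuous_attains_inf assms(1,2) by blast
  then show ?thesis
    using that assms(3) by blast
qed (use that[of 1] in auto)

lemma integral_concave_comp_derivative:
  fixes f f' u c :: "real \<Rightarrow> real"
  assumes tangent: "\<And>s t. 0 < s \<Longrightarrow> 0 < t \<Longrightarrow> f s \<le> f t + f' t * (s - t)"
    and f: "continuous_on {0<..} f" and f': "continuous_on {0<..} f'"
    and u: "continuous_on {l..r} u" "\<forall>y\<in>{l..r}. 0 < u y"
    and c: "continuous_on {l..r} c"
    and der: "((\<lambda>t. integral {l..r} (\<lambda>y. f (u y + (t - t0) * c y))) has_real_derivative D) (at t0)"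
  shows "D = integral {l..r} (\<lambda>y. f' (u y) * c y)"
proof -
  define L where "L = integral {l..r} (\<lambda>y. f' (u y) * c y)"
  obtain m where m: "0 < m" "\<forall>y\<in>{l..r}. m \<le> u y"
    using continuous_on_compact_pos_lower_bound[OF compact_Icc u] .
  obtain B where B: "0 < B" "\<forall>y\<in>{l..r}. \<bar>c y\<bar> \<le> B"
    using compact_imp_bounded[OF compact_continuous_image[OF c compact_Icc]]
    unfolding bounded_pos by auto
  have integrable_f_comp: "(\<lambda>y. f (g y)) integrable_on {l..r}"
    if "continuous_on {l..r} g" "\<forall>y\<in>{l..r}. 0 < g y" for g
    using that by (intro integrable_continuous_interval continuous_on_compose2[OF f]) auto
  have integrable_f'_u: "(\<lambda>y. f' (u y) * c y) integrable_on {l..r}"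
    using u by (intro integrable_continuous_interval continuous_intros c
        continuous_on_compose2[OF f']) auto
  have supergradient:
    "integral {l..r} (\<lambda>y. f (u y + s * c y)) - integral {l..r} (\<lambda>y. f (u y)) \<le> s * L"
    if s: "\<bar>s\<bar> < m / B" for s
  proof -
    have pos: "0 < u y + s * c y" if "y \<in> {l..r}" for y
    proof -
      have "\<bar>s * c y\<bar> \<le> \<bar>s\<bar> * B"
        using B that by (simp add: abs_mult mult_left_mono)
      also have "\<dots> < m"
        using s B by (simp add: pos_less_divide_eq)
      finally have "\<bar>s * c y\<bar> < m" .
      moreover have "m \<le> u y"
        using m that by blast
      ultimately show ?thesis
        by linarith
    qed
    have "integral {l..r} (\<lambda>y. f (u y + s * c y))
        \<le> integral {l..r} (\<lambda>y. f (u y) + s * (f' (u y) * c y))"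
    proof (rule integral_le)
      fix y assume y: "y \<in> {l..r}"
      show "f (u y + s * c y) \<le> f (u y) + s * (f' (u y) * c y)"
        using tangent[OF pos[OF y], of "u y"] u(2) y by (simp add: algebra_simps)
    qed (use pos u in \<open>auto intro!: integrable_f_comp integrable_add integrable_on_mult_right
          integrable_f'_u continuous_intros c\<close>)
    also have "\<dots> = integral {l..r} (\<lambda>y. f (u y)) + s * L"
      unfolding L_def using u
      by (simp add: integral_add integrable_f_comp integrable_on_mult_right[OF integrable_f'_u])
    finally show ?thesis
      by simp
  qed
  have "\<forall>\<^sub>F s in at 0. integral {l..r} (\<lambda>y. f (u y + (t0 + s - t0) * c y))
      - integral {l..r} (\<lambda>y. f (u y + (t0 - t0) * c y)) \<le> s * L"
    unfolding eventually_at using m B supergradient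
    by (intro exI[of _ "m / B"]) auto
  with der show ?thesis
    unfolding L_def by (rule DERIV_eq_supergradient)
qed

lemma integral_antitone_pairing_nonneg_imp_eq:
  fixes h u1 u2 :: "real \<Rightarrow> real"
  assumes h: "\<And>s t. 0 < s \<Longrightarrow> s < t \<Longrightarrow> h t < h s" and h_cont: "continuous_on {0<..} h"
    and u1: "continuous_on {l..r} u1" "\<forall>y\<in>{l..r}. 0 < u1 y"
    and u2: "continuous_on {l..r} u2" "\<forall>y\<in>{l..r}. 0 < u2 y"
    and "l < r"
    and nonneg: "0 \<le> integral {l..r} (\<lambda>y. (h (u1 y) - h (u2 y)) * (u1 y - u2 y))"
  shows "\<forall>y\<in>{l..r}. u1 y = u2 y"
proof -
  define g where "g y = (h (u2 y) - h (u1 y)) * (u1 y - u2 y)" for y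
  have g_pos: "0 < g y" if "y \<in> {l..r}" "u1 y \<noteq> u2 y" for y
    using that h[of "u1 y" "u2 y"] h[of "u2 y" "u1 y"] u1(2) u2(2)
    by (auto simp: g_def zero_less_mult_iff linorder_neq_iff)
  then have g_nonneg: "0 \<le> g y" if "y \<in> {l..r}" for y
    using that by (cases "u1 y = u2 y") (auto simp: g_def intro: less_imp_le)
  have g_cont: "continuous_on {l..r} g"
    unfolding g_def using u1 u2
    by (intro continuous_intros continuous_on_compose2[OF h_cont]) auto
  have "integral {l..r} g = - integral {l..r} (\<lambda>y. (h (u1 y) - h (u2 y)) * (u1 y - u2 y))"
    unfolding g_def by (simp flip: integral_neg add: algebra_simps)
  moreover have "0 \<le> integral {l..r} g"
    using g_nonneg g_cont by (intro integral_nonneg integrable_continuous_interval) auto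
  ultimately have "integral {l..r} g = 0"
    using nonneg by linarith
  then show ?thesis
    using integral_eq_0_iff[OF g_cont \<open>l < r\<close>] g_nonneg g_pos by fastforce
qed

lemma sum_fun_upd_diff:
  fixes f g :: "'a \<Rightarrow> 'b::ab_group_add"
  assumes "k \<in> A" "finite A" "\<And>i. i \<in> A \<Longrightarrow> i \<noteq> k \<Longrightarrow> f i = g i"
  shows "(\<Sum>i\<in>A. f i) = (\<Sum>i\<in>A. g i) + (f k - g k)"
proof -
  have "(\<Sum>i\<in>A. f i) = (\<Sum>i\<in>A. g i + (if i = k then f k - g k else 0))"
    by (rule sum.cong) (use assms in auto)
  with assms(1,2) show ?thesis
    by (simp add: sum.distrib)
qed

lemma rotation_eq_0:
  fixes p q x y :: real
  assumes "p^2 + q^2 \<noteq> 0" "p * x + q * y = 0" "p * y - q * x = 0"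
  shows "x = 0" "y = 0"
proof -
  have "(p^2 + q^2) * x = p * (p * x + q * y) - q * (p * y - q * x)"
    by (simp add: algebra_simps power2_eq_square)
  also have "\<dots> = 0"
    by (simp only: assms(2,3) mult_zero_right diff_zero)
  finally show "x = 0"
    using assms(1) by auto
  have "(p^2 + q^2) * y = q * (p * x + q * y) + p * (p * y - q * x)"
    by (simp add: algebra_simps power2_eq_square)
  also have "\<dots> = 0"
    by (simp only: assms(2,3) mult_zero_right add_0)
  finally show "y = 0"
    using assms(1) by auto
qed

definition dphi :: "real \<Rightarrow> real \<Rightarrow> real \<Rightarrow> real" where
  "dphi alpha j t = cj alpha j * t powr (- 1 / alpha)"

lemma cj_pos: "j \<noteq> 0 \<Longrightarrow> cj alpha j > 0"
  unfolding cj_def by simp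

lemma phi_has_real_derivative:
  assumes "alpha > 0" "t > 0"
  shows "(phi alpha j has_real_derivative dphi alpha j t) (at t)"
proof (cases "alpha = 1")
  case True
  have "((\<lambda>t. cj alpha j * ln t) has_real_derivative cj alpha j * (1/t)) (at t)"
    using assms by (auto intro!: derivative_eq_intros)
  moreover have "phi alpha j = (\<lambda>t. cj alpha j * ln t)"
    using True by (simp add: phi_def fun_eq_iff)
  ultimately show ?thesis
    using True assms by (simp add: dphi_def powr_neg_one)
next
  case False
  have "((\<lambda>t. cj alpha j * alpha / (alpha - 1) * t powr ((alpha - 1) / alpha)) has_real_derivative
      cj alpha j * alpha / (alpha - 1) * (((alpha - 1) / alpha) * t powr ((alpha - 1) / alpha - 1))) (at t)"
    using assms by (auto intro!: derivative_eq_intros)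
  moreover have "(alpha - 1) / alpha - 1 = -1/alpha"
    using assms by (simp add: field_simps)
  moreover have "cj alpha j * alpha / (alpha - 1) * ((alpha - 1) / alpha) = cj alpha j"
    using assms False by (simp add: field_simps)
  ultimately show ?thesis
    using False assms unfolding phi_def dphi_def by (simp add: mult.assoc)
qed

lemma dphi_strict_antimono:
  assumes "alpha > 0" "j \<noteq> 0" "0 < s" "s < t"
  shows "dphi alpha j t < dphi alpha j s"
proof -
  have "t powr (-1/alpha) < s powr (-1/alpha)"
    using assms by (intro powr_less_mono2_neg) auto
  then show ?thesis
    using cj_pos[OF assms(2)] unfolding dphi_def by simp
qed

lemma phi_le_tangent:
  assumes "alpha > 0" "j \<noteq> 0" "0 < s" "0 < t"
  shows "phi alpha j s \<le> phi alpha j t + dphi alpha j t * (s - t)"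
proof (cases s t rule: linorder_cases)
  case less
  then obtain z where z: "s < z" "z < t" "phi alpha j t - phi alpha j s = (t - s) * dphi alpha j z"
    using MVT2[of s t "phi alpha j" "dphi alpha j"] phi_has_real_derivative assms by force
  have "dphi alpha j t < dphi alpha j z"
    using dphi_strict_antimono assms z by force
  then have "(t - s) * dphi alpha j t \<le> (t - s) * dphi alpha j z"
    using less by simp
  with z show ?thesis
    by (simp add: algebra_simps)
next
  case greater
  then obtain z where z: "t < z" "z < s" "phi alpha j s - phi alpha j t = (s - t) * dphi alpha j z"
    using MVT2[of t s "phi alpha j" "dphi alpha j"] phi_has_real_derivative assms by force
  have "dphi alpha j z < dphi alpha j t"
    using dphi_strict_antimono assms z by force
  then have "(s - t) * dphi alpha j z \<le> (s - t) * dphi alpha j t"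
    using greater by simp
  with z show ?thesis
    by (simp add: algebra_simps)
qed simp

lemma continuous_on_phi: "alpha > 0 \<Longrightarrow> continuous_on {0<..} (phi alpha j)"
  by (meson DERIV_isCont continuous_at_imp_continuous_on greaterThan_iff phi_has_real_derivative)

lemma continuous_on_dphi: "continuous_on {0<..} (dphi alpha j)"
  unfolding dphi_def by (intro continuous_intros) auto

lemma trig_fun_upd_0: "trig n (a(0 := t)) b y = trig n a b y + (t - a 0) * 1"
proof -
  have "(\<Sum>k=1..n. (a(0 := t)) k * cos (2 * pi * real k * y) + b k * sin (2 * pi * real k * y))
      = (\<Sum>k=1..n. a k * cos (2 * pi * real k * y) + b k * sin (2 * pi * real k * y))"
    by (rule sum.cong) auto
  then show ?thesis
    unfolding trig_def by simp
qed

lemma trig_fun_upd_cos: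
  assumes "k \<in> {1..n}"
  shows "trig n (a(k := t)) b y = trig n a b y + (t - a k) * cos (2 * pi * real k * y)"
  unfolding trig_def
  by (subst sum_fun_upd_diff[OF assms]) (use assms in \<open>auto simp: algebra_simps\<close>)

lemma trig_fun_upd_sin:
  assumes "k \<in> {1..n}"
  shows "trig n a (b(k := t)) y = trig n a b y + (t - b k) * sin (2 * pi * real k * y)"
  unfolding trig_def
  by (subst sum_fun_upd_diff[OF assms]) (use assms in \<open>auto simp: algebra_simps\<close>)

lemma trig_diff:
  "trig n a1 b1 y - trig n a2 b2 y = trig n (\<lambda>k. a1 k - a2 k) (\<lambda>k. b1 k - b2 k) y"
  unfolding trig_def by (simp add: sum_subtractf[symmetric] algebra_simps)

lemma continuous_on_trig [continuous_intros]: "continuous_on A (trig n a b)"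
  unfolding trig_def by (intro continuous_intros)

lemma integral_mult_trig:
  fixes w :: "real \<Rightarrow> real"
  assumes "continuous_on {l..r} w"
  shows "integral {l..r} (\<lambda>y. w y * trig n a b y) = a 0 * integral {l..r} w
    + (\<Sum>k=1..n. a k * integral {l..r} (\<lambda>y. w y * cos (2 * pi * real k * y))
                + b k * integral {l..r} (\<lambda>y. w y * sin (2 * pi * real k * y)))"
proof -
  have int: "(\<lambda>y. w y * g y) integrable_on {l..r}" if "continuous_on {l..r} g" for g
    using assms that by (intro integrable_continuous_interval continuous_intros)
  have "integral {l..r} (\<lambda>y. w y * trig n a b y) = integral {l..r} (\<lambda>y. a 0 * w y
      + (\<Sum>k=1..n. a k * (w y * cos (2 * pi * real k * y)) + b k * (w y * sin (2 * pi * real k * y))))"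
    unfolding trig_def by (simp add: algebra_simps sum_distrib_left)
  also have "\<dots> = a 0 * integral {l..r} w
    + (\<Sum>k=1..n. a k * integral {l..r} (\<lambda>y. w y * cos (2 * pi * real k * y))
                + b k * integral {l..r} (\<lambda>y. w y * sin (2 * pi * real k * y)))"
    using assms
    by (simp add: integral_add integral_sum integrable_sum integrable_add integrable_on_mult_right
        int continuous_intros integrable_continuous_interval)
  finally show ?thesis .
qed

lemma integral_mult_trig_nonneg:
  fixes w :: "real \<Rightarrow> real"
  assumes "continuous_on {l..r} w" "integral {l..r} w = 0"
    and "\<forall>k\<in>{1..n}. 0 \<le> p k"
    and "\<And>k. k \<in> {1..n} \<Longrightarrow> integral {l..r} (\<lambda>y. w y * cos (2 * pi * real k * y))
          = (p k * a k + q k * b k) / ((p k)^2 + (q k)^2)"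
    and "\<And>k. k \<in> {1..n} \<Longrightarrow> integral {l..r} (\<lambda>y. w y * sin (2 * pi * real k * y))
          = (p k * b k - q k * a k) / ((p k)^2 + (q k)^2)"
  shows "0 \<le> integral {l..r} (\<lambda>y. w y * trig n a b y)"
proof -
  have "a k * integral {l..r} (\<lambda>y. w y * cos (2 * pi * real k * y))
      + b k * integral {l..r} (\<lambda>y. w y * sin (2 * pi * real k * y))
      = p k * ((a k)^2 + (b k)^2) / ((p k)^2 + (q k)^2)" if "k \<in> {1..n}" for k
    unfolding assms(4,5)[OF that]
    by (simp add: add_divide_distrib[symmetric] power2_eq_square algebra_simps)
  then have "integral {l..r} (\<lambda>y. w y * trig n a b y)
      = (\<Sum>k=1..n. p k * ((a k)^2 + (b k)^2) / ((p k)^2 + (q k)^2))"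
    unfolding integral_mult_trig[OF assms(1)] assms(2) by simp
  also have "\<dots> \<ge> 0"
    using assms(3) by (intro sum_nonneg divide_nonneg_nonneg mult_nonneg_nonneg) auto
  finally show ?thesis .
qed

lemma Phi_directional_derivative:
  assumes "alpha > 0" "j \<noteq> 0" "continuous_on {0..1} V" "inC n V a b"
    and "continuous_on {0..1} c"
    and shift: "\<And>t y. trig n (A t) (B t) y = trig n a b y + (t - t0) * c y"
    and "((\<lambda>t. Phi alpha j n V (A t) (B t)) has_real_derivative D) (at t0)"
  shows "D = integral {0..1} (\<lambda>y. dphi alpha j (trig n a b y - V y) * c y)"
proof (rule integral_concave_comp_derivative[where f = "phi alpha j" and u = "\<lambda>y. trig n a b y - V y"])
  show "((\<lambda>t. integral {0..1} (\<lambda>y. phi alpha j (trig n a b y - V y + (t - t0) * c y)))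
      has_real_derivative D) (at t0)"
    using assms(7) unfolding Phi_def shift by (simp add: algebra_simps)
  show "continuous_on {0..1} (\<lambda>y. trig n a b y - V y)"
    using assms(3) by (intro continuous_intros)
qed (use assms phi_le_tangent continuous_on_phi continuous_on_dphi in \<open>auto simp: inC_def\<close>)

lemma solves_S_moments:
  assumes "alpha > 0" "j \<noteq> 0" "continuous_on {0..1} V" "inC n V a b"
    and S: "solves_S alpha j n V p q a b"
  defines "w \<equiv> \<lambda>y. dphi alpha j (trig n a b y - V y)"
  shows "integral {0..1} w = 1"
    and "k \<in> {1..n} \<Longrightarrow> integral {0..1} (\<lambda>y. w y * cos (2 * pi * real k * y))
          = (p k * a k + q k * b k) / ((p k)^2 + (q k)^2)"
    and "k \<in> {1..n} \<Longrightarrow> integral {0..1} (\<lambda>y. w y * sin (2 * pi * real k * y))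
          = (p k * b k - q k * a k) / ((p k)^2 + (q k)^2)"
proof -
  note derivative = Phi_directional_derivative[OF assms(1-4), folded w_def]
  have basis: "continuous_on {0..1} (\<lambda>y. cos (2 * pi * real k * y))"
              "continuous_on {0..1} (\<lambda>y. sin (2 * pi * real k * y))" for k
    by (intro continuous_intros)+
  show "integral {0..1} w = 1"
    using derivative[OF _ trig_fun_upd_0, of 1] S by (simp add: solves_S_def w_def)
  show "integral {0..1} (\<lambda>y. w y * cos (2 * pi * real k * y))
      = (p k * a k + q k * b k) / ((p k)^2 + (q k)^2)" if "k \<in> {1..n}"
    using derivative[OF basis(1) trig_fun_upd_cos[OF that],
        of "(p k * a k + q k * b k) / ((p k)^2 + (q k)^2)"]
      S that by (simp add: solves_S_def w_def)
  show "integral {0..1} (\<lambda>y. w y * sin (2 * pi * real k * y))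
      = (p k * b k - q k * a k) / ((p k)^2 + (q k)^2)" if "k \<in> {1..n}"
    using derivative[OF basis(2) trig_fun_upd_sin[OF that],
        of "(p k * b k - q k * a k) / ((p k)^2 + (q k)^2)"]
      S that by (simp add: solves_S_def w_def)
qed

lemma continuous_on_dphi_density:
  assumes "continuous_on {0..1} V" "inC n V a b"
  shows "continuous_on {0..1} (\<lambda>y. dphi alpha j (trig n a b y - V y))"
  using assms
  by (auto simp: inC_def intro!: continuous_on_compose2[OF continuous_on_dphi] continuous_intros)

lemma solves_S_moments_diff:
  assumes a: "alpha > 0" and j: "j \<noteq> 0" and V: "continuous_on {0..1} V"
    and C1: "inC n V a1 b1" and S1: "solves_S alpha j n V p q a1 b1"
    and C2: "inC n V a2 b2" and S2: "solves_S alpha j n V p q a2 b2"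
  defines "w \<equiv> \<lambda>y. dphi alpha j (trig n a1 b1 y - V y) - dphi alpha j (trig n a2 b2 y - V y)"
  shows "continuous_on {0..1} w" "integral {0..1} w = 0"
    and "k \<in> {1..n} \<Longrightarrow> integral {0..1} (\<lambda>y. w y * cos (2 * pi * real k * y))
          = (p k * (a1 k - a2 k) + q k * (b1 k - b2 k)) / ((p k)^2 + (q k)^2)"
    and "k \<in> {1..n} \<Longrightarrow> integral {0..1} (\<lambda>y. w y * sin (2 * pi * real k * y))
          = (p k * (b1 k - b2 k) - q k * (a1 k - a2 k)) / ((p k)^2 + (q k)^2)"
proof -
  note dphi_u = continuous_on_dphi_density[OF V C1] continuous_on_dphi_density[OF V C2]
  note M1 = solves_S_moments[OF a j V C1 S1] and M2 = solves_S_moments[OF a j V C2 S2]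
  have w_moment: "integral {0..1} (\<lambda>y. w y * g y)
      = integral {0..1} (\<lambda>y. dphi alpha j (trig n a1 b1 y - V y) * g y)
      - integral {0..1} (\<lambda>y. dphi alpha j (trig n a2 b2 y - V y) * g y)"
    if "continuous_on {0..1} g" for g
    unfolding w_def left_diff_distrib using that dphi_u
    by (intro integral_diff integrable_continuous_interval continuous_intros)
  have basis: "continuous_on {0..1} (\<lambda>y. cos (2 * pi * real k * y))"
              "continuous_on {0..1} (\<lambda>y. sin (2 * pi * real k * y))" for k
    by (intro continuous_intros)+
  show "continuous_on {0..1} w"
    unfolding w_def using dphi_u by (intro continuous_intros)
  show "integral {0..1} w = 0"
    using w_moment[of "\<lambda>_. 1"] M1(1) M2(1) by simp
  show "integral {0..1} (\<lambda>y. w y * cos (2 * pi * real k * y))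
      = (p k * (a1 k - a2 k) + q k * (b1 k - b2 k)) / ((p k)^2 + (q k)^2)" if "k \<in> {1..n}"
    unfolding w_moment[OF basis(1)] M1(2)[OF that] M2(2)[OF that]
    by (simp add: diff_divide_distrib[symmetric] right_diff_distrib)
  show "integral {0..1} (\<lambda>y. w y * sin (2 * pi * real k * y))
      = (p k * (b1 k - b2 k) - q k * (a1 k - a2 k)) / ((p k)^2 + (q k)^2)" if "k \<in> {1..n}"
    unfolding w_moment[OF basis(2)] M1(3)[OF that] M2(3)[OF that]
    by (simp add: diff_divide_distrib[symmetric] right_diff_distrib)
qed

lemma solves_S_same_density:
  assumes a: "alpha > 0" and j: "j \<noteq> 0" and V: "continuous_on {0..1} V"
    and p: "\<forall>k\<in>{1..n}. 0 \<le> p k"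
    and C1: "inC n V a1 b1" and S1: "solves_S alpha j n V p q a1 b1"
    and C2: "inC n V a2 b2" and S2: "solves_S alpha j n V p q a2 b2"
  shows "\<forall>y\<in>{0..1}. trig n a1 b1 y = trig n a2 b2 y"
proof -
  define u1 where "u1 y = trig n a1 b1 y - V y" for y
  define u2 where "u2 y = trig n a2 b2 y - V y" for y
  have u: "continuous_on {0..1} u1" "\<forall>y\<in>{0..1}. 0 < u1 y"
          "continuous_on {0..1} u2" "\<forall>y\<in>{0..1}. 0 < u2 y"
    using V C1 C2 by (auto simp: u1_def u2_def inC_def intro!: continuous_intros)
  have u_diff: "u1 y - u2 y = trig n (\<lambda>k. a1 k - a2 k) (\<lambda>k. b1 k - b2 k) y" for y
    unfolding u1_def u2_def trig_diff[symmetric] by simp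
  have "0 \<le> integral {0..1} (\<lambda>y. (dphi alpha j (u1 y) - dphi alpha j (u2 y))
      * trig n (\<lambda>k. a1 k - a2 k) (\<lambda>k. b1 k - b2 k) y)"
    using integral_mult_trig_nonneg[OF solves_S_moments_diff(1,2)[OF a j V C1 S1 C2 S2] p
        solves_S_moments_diff(3,4)[OF a j V C1 S1 C2 S2]]
    unfolding u1_def u2_def .
  then have pairing:
    "0 \<le> integral {0..1} (\<lambda>y. (dphi alpha j (u1 y) - dphi alpha j (u2 y)) * (u1 y - u2 y))"
    by (simp only: u_diff)
  have "\<forall>y\<in>{0..1}. u1 y = u2 y"
  proof (rule integral_antitone_pairing_nonneg_imp_eq[where h = "dphi alpha j"])
    show "dphi alpha j t < dphi alpha j s" if "0 < s" "s < t" for s t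
      using dphi_strict_antimono[OF a j that] .
  qed (use pairing continuous_on_dphi u in auto)
  then show ?thesis
    by (simp add: u1_def u2_def)
qed

lemma solves_S_coeffs_eq:
  assumes a: "alpha > 0" and j: "j \<noteq> 0" and V: "continuous_on {0..1} V"
    and pq: "\<forall>k\<in>{1..n}. (p k)^2 + (q k)^2 \<noteq> 0"
    and C1: "inC n V a1 b1" and S1: "solves_S alpha j n V p q a1 b1"
    and C2: "inC n V a2 b2" and S2: "solves_S alpha j n V p q a2 b2"
    and same: "\<forall>y\<in>{0..1}. trig n a1 b1 y = trig n a2 b2 y"
  shows "(\<forall>k\<in>{0..n}. a1 k = a2 k) \<and> (\<forall>k\<in>{1..n}. b1 k = b2 k)"
proof -
  note M1 = solves_S_moments[OF a j V C1 S1]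
  note M2 = solves_S_moments[OF a j V C2 S2]
  have moment_eq: "integral {0..1} (\<lambda>y. dphi alpha j (trig n a1 b1 y - V y) * g y)
      = integral {0..1} (\<lambda>y. dphi alpha j (trig n a2 b2 y - V y) * g y)" for g
    by (rule integral_cong) (simp add: same)
  have coeff: "a1 k = a2 k \<and> b1 k = b2 k" if k: "k \<in> {1..n}" for k
  proof -
    have N: "(p k)^2 + (q k)^2 \<noteq> 0"
      using pq k by blast
    have "(p k * a1 k + q k * b1 k) / ((p k)^2 + (q k)^2) = (p k * a2 k + q k * b2 k) / ((p k)^2 + (q k)^2)"
         "(p k * b1 k - q k * a1 k) / ((p k)^2 + (q k)^2) = (p k * b2 k - q k * a2 k) / ((p k)^2 + (q k)^2)"
      by (metis M1(2,3)[OF k] M2(2,3)[OF k] moment_eq)+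
    then have "p k * a1 k + q k * b1 k = p k * a2 k + q k * b2 k"
              "p k * b1 k - q k * a1 k = p k * b2 k - q k * a2 k"
      by (metis N divide_cancel_right)+
    then have "p k * (a1 k - a2 k) + q k * (b1 k - b2 k) = 0"
              "p k * (b1 k - b2 k) - q k * (a1 k - a2 k) = 0"
      unfolding right_diff_distrib by linarith+
    from rotation_eq_0[OF N this] show ?thesis
      by simp
  qed
  then have "(\<Sum>k=1..n. a1 k) = (\<Sum>k=1..n. a2 k)"
    by (intro sum.cong) simp_all
  then have "a1 0 = a2 0"
    using same[rule_format, of 0] by (simp add: trig_def)
  show ?thesis
  proof (intro conjI ballI)
    show "a1 k = a2 k" if "k \<in> {0..n}" for k
      using that coeff \<open>a1 0 = a2 0\<close> by (cases "k = 0") auto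
    show "b1 k = b2 k" if "k \<in> {1..n}" for k
      using that coeff by blast
  qed
qed

theorem proposition4p2:
  fixes alpha j :: real and n :: nat and V :: "real \<Rightarrow> real"
    and p q a1 b1 a2 b2 :: "nat \<Rightarrow> real"
  assumes "0 < alpha" and "alpha \<le> 2" and "j \<noteq> 0"
    and "C2_torus V"
    and "\<forall>k\<in>{1..n}. p k \<ge> 0 \<and> (p k)^2 + (q k)^2 > 0"
    and "inC n V a1 b1" and "solves_S alpha j n V p q a1 b1"
    and "inC n V a2 b2" and "solves_S alpha j n V p q a2 b2"
  shows "(\<forall>k\<in>{0..n}. a1 k = a2 k) \<and> (\<forall>k\<in>{1..n}. b1 k = b2 k)"
proof -
  obtain V' where "\<forall>x. (V has_real_derivative V' x) (at x)"
    using assms(4) unfolding C2_torus_def by blast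
  then have V: "continuous_on {0..1} V"
    by (meson DERIV_isCont continuous_at_imp_continuous_on)
  have same: "\<forall>y\<in>{0..1}. trig n a1 b1 y = trig n a2 b2 y"
    by (rule solves_S_same_density[OF assms(1,3) V _ assms(6-9)]) (use assms(5) in blast)
  show ?thesis
    by (rule solves_S_coeffs_eq[OF assms(1,3) V _ assms(6-9) same]) (use assms(5) in force)
qed

end
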